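(* Let $F$ be an Archimedean vector lattice and $E\subset F$ a sublattice. If $E$ is regular and the ideal $I(E)$ generated by $E$ is a projection band, then the inclusion of $E$ into $F$ is an order embedding. Conversely, if $E$ is order dense in $I(E)$ and the inclusion of $E$ into $F$ is an order embedding, then $I(E)$ is a projection band.
   Context: A sublattice $E\subset F$ is regular if for every $G\subset E$ with $\bigwedge_E G=0$ (infimum in $E$) one has $\bigwedge_F G=0$. $E$ is order dense in a sublattice $H\supset E$ if for every $h\in H$ with $h>0$ there is $e\in E$ with $0<e\le h$. An ideal $H$ is a projection band if $F=H+H^d$, where $H^d$ is the disjoint complement. A net order converges to $f$ if there is a set $G$ with $\bigwedge G=0$ such that for every $g\in G$ the net is eventually in $[f-g,f+g]$. The inclusion of $E$ into $F$ is an order embedding if for nets in $E$ and points of $E$, order convergence in $E$ is equivalent to order convergence in $F$. *)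

theory Defs
  imports Complex_Main
begin

text \<open>Vector lattices are modelled by the type class
  ordered_real_vector + lattice (the lattice order is the vector order).\<close>

definition vabs :: "'a::{ordered_real_vector, lattice} \<Rightarrow> 'a" where
  "vabs x = sup x (- x)"

definition archimedean_vl :: "'a::{ordered_real_vector, lattice} itself \<Rightarrow> bool" where
  "archimedean_vl _ \<longleftrightarrow>
     (\<forall>x y :: 'a. 0 \<le> x \<and> (\<forall>n::nat. real n *\<^sub>R x \<le> y) \<longrightarrow> x = 0)"

definition vector_sublattice :: "'a::{ordered_real_vector, lattice} set \<Rightarrow> bool" where
  "vector_sublattice E \<longleftrightarrow> subspace E \<and>
     (\<forall>x\<in>E. \<forall>y\<in>E. sup x y \<in> E \<and> inf x y \<in> E)"

definition is_inf_in :: "'a::order set \<Rightarrow> 'a set \<Rightarrow> 'a \<Rightarrow> bool" where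
  "is_inf_in S G x \<longleftrightarrow> x \<in> S \<and> (\<forall>g\<in>G. x \<le> g) \<and>
     (\<forall>y\<in>S. (\<forall>g\<in>G. y \<le> g) \<longrightarrow> y \<le> x)"

definition regular_sublattice :: "'a::{ordered_real_vector, lattice} set \<Rightarrow> bool" where
  "regular_sublattice E \<longleftrightarrow>
     (\<forall>G. G \<subseteq> E \<and> is_inf_in E G 0 \<longrightarrow> is_inf_in UNIV G 0)"

definition order_ideal :: "'a::{ordered_real_vector, lattice} set \<Rightarrow> bool" where
  "order_ideal H \<longleftrightarrow> subspace H \<and>
     (\<forall>f g. g \<in> H \<and> vabs f \<le> vabs g \<longrightarrow> f \<in> H)"

definition ideal_gen :: "'a::{ordered_real_vector, lattice} set \<Rightarrow> 'a set" where
  "ideal_gen E = \<Inter> {H. order_ideal H \<and> E \<subseteq> H}"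

definition disj_compl :: "'a::{ordered_real_vector, lattice} set \<Rightarrow> 'a set" where
  "disj_compl H = {f. \<forall>h\<in>H. inf (vabs f) (vabs h) = 0}"

definition projection_band :: "'a::{ordered_real_vector, lattice} set \<Rightarrow> bool" where
  "projection_band H \<longleftrightarrow> order_ideal H \<and>
     (\<forall>f. \<exists>h\<in>H. \<exists>k\<in>disj_compl H. f = h + k)"

definition order_dense_in :: "'a::{ordered_real_vector, lattice} set \<Rightarrow> 'a set \<Rightarrow> bool" where
  "order_dense_in E H \<longleftrightarrow> (\<forall>h\<in>H. 0 < h \<longrightarrow> (\<exists>e\<in>E. 0 < e \<and> e \<le> h))"

definition order_conv_in ::
  "'a::{ordered_real_vector, lattice} set \<Rightarrow> 'i filter \<Rightarrow> ('i \<Rightarrow> 'a) \<Rightarrow> 'a \<Rightarrow> bool" where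
  "order_conv_in S N x f \<longleftrightarrow> (\<exists>G. G \<subseteq> S \<and> is_inf_in S G 0 \<and>
     (\<forall>g\<in>G. \<forall>\<^sub>F i in N. f - g \<le> x i \<and> x i \<le> f + g))"

text \<open>A net over a directed set is represented by its tail filter
  (a proper filter); up to re-indexing every net in E is a map into E along a proper
  filter on the carrier type, which suffices since order convergence depends only on
  the image filter.\<close>
definition order_embedding :: "'a::{ordered_real_vector, lattice} set \<Rightarrow> bool" where
  "order_embedding E \<longleftrightarrow>
     (\<forall>(N :: 'a filter) (x :: 'a \<Rightarrow> 'a) f. N \<noteq> bot \<longrightarrow> (\<forall>\<^sub>F i in N. x i \<in> E) \<longrightarrow> f \<in> E \<longrightarrow>
        (order_conv_in E N x f \<longleftrightarrow> order_conv_in UNIV N x f))"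

end

theory Submission
  imports Defs "HOL-Library.Lattice_Algebras"
begin

text \<open>
  Regularity and projection band: let x_i converge to f in order in F, dominated by G, and let G'
  consist of the e in E with |x_i - f| \<le> e eventually. A lower bound z \<in> E of G' lies below every
  g \<in> G: the projection onto I(E) bounds E \<inter> [0, g] by some e \<in> E, and an Archimedean argument
  shows that the elements (z - |x_i - f|)^+ of E have infimum 0 in E, hence in F by regularity,
  although they all dominate (z - g)^+.

  Order embedding and order density: for f \<ge> 0 put A = E \<inter> [0, f]. The net of differences a' - a,
  a \<le> a' in A, converges to 0 in F by the Archimedean property, hence also in E. This yields an
  upper bound u \<in> E of A, and f = (f \<sqinter> u) + (f - u)^+, where (f - u)^+ is disjoint from I(E): by
  order density it would otherwise dominate some 0 < e \<in> E, and A + e \<subseteq> A contradicts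
  the convergence of the differences in E.
\<close>

section \<open>Arithmetic in vector lattices\<close>

text \<open>The sort of vector lattices is not an instance of the class
  \<^class>\<open>lattice_ab_group_add_abs\<close>, so its facts are obtained by interpreting the class locale.\<close>

interpretation vl: lattice_ab_group_add_abs vabs "(+)" "0::'a::{ordered_real_vector, lattice}"
    "(-)" uminus "(\<le>)" "(<)" inf sup
  by unfold_locales (rule vabs_def)

lemma vabs_scaleR_le: "vabs (c *\<^sub>R (a::'a::{ordered_real_vector, lattice})) \<le> \<bar>c\<bar> *\<^sub>R vabs a"
proof -
  have "\<bar>c\<bar> *\<^sub>R a \<le> \<bar>c\<bar> *\<^sub>R vabs a" "\<bar>c\<bar> *\<^sub>R (- a) \<le> \<bar>c\<bar> *\<^sub>R vabs a"
    by (intro scaleR_left_mono vl.abs_ge_self vl.abs_ge_minus_self abs_ge_zero)+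
  then show ?thesis
    by (cases "0 \<le> c") (auto simp: vl.abs_le_iff)
qed

lemma vabs_diff_le_iff:
  "vabs (x - f) \<le> e \<longleftrightarrow> f - e \<le> x \<and> x \<le> (f::'a::{ordered_real_vector, lattice}) + e"
  unfolding vl.abs_le_iff by (auto simp: algebra_simps)

lemma inf_add_le_add_inf:
  fixes x y z :: "'a::{ordered_real_vector, lattice}"
  assumes "0 \<le> x" "0 \<le> y" "0 \<le> z"
  shows "inf x (y + z) \<le> inf x y + inf x z"
proof -
  define u where "u = inf x (y + z)"
  have "u - y \<le> z" by (simp add: u_def diff_le_eq add.commute le_infI2)
  moreover have "u - y \<le> u" using assms(2) by (simp add: diff_le_eq)
  then have "u - y \<le> x" by (simp add: u_def le_infI1)
  ultimately have "sup 0 (u - y) \<le> inf x z" using assms by simp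
  moreover have "u - inf u y = sup 0 (u - y)"
    by (simp add: vl.add_sup_distrib_left)
  ultimately have "u \<le> inf x z + inf u y" by (simp only: diff_le_eq[symmetric])
  also have "inf u y \<le> inf x y" by (simp add: u_def le_infI1)
  finally show ?thesis by (simp add: u_def add.commute)
qed

lemma inf_scaleR_eq_0:
  fixes p w :: "'a::{ordered_real_vector, lattice}"
  assumes "0 \<le> p" "0 \<le> w" "inf p w = 0"
  shows "inf p (real n *\<^sub>R w) = 0"
proof (induction n)
  case 0 then show ?case using assms(1) by (simp add: inf.absorb2)
next
  case (Suc n)
  have "inf p (real n *\<^sub>R w + w) \<le> inf p (real n *\<^sub>R w) + inf p w"
    using assms by (intro inf_add_le_add_inf) (simp_all add: scaleR_nonneg_nonneg)
  then have "inf p (real (Suc n) *\<^sub>R w) \<le> 0"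
    using Suc assms(3) by (simp add: algebra_simps)
  moreover have "0 \<le> inf p (real (Suc n) *\<^sub>R w)" using assms by (simp add: scaleR_nonneg_nonneg)
  ultimately show ?case by (rule order.antisym)
qed

lemma inf_pos_neg_part: "inf (sup a 0) (sup (- a) 0) = (0::'a::{ordered_real_vector, lattice})"
proof -
  have "sup a 0 + sup (- a) 0 = sup (sup a 0 + - a) (sup a 0)"
    by (simp add: vl.add_sup_distrib_left)
  also have "sup a 0 + - a = sup 0 (- a)"
    using vl.add_sup_distrib_right[of a 0 "- a"] by simp
  finally have "sup a 0 + sup (- a) 0 = sup (sup a 0) (sup (- a) 0)"
    by (simp add: ac_simps)
  then show ?thesis using vl.add_eq_inf_sup[of "sup a 0" "sup (- a) 0"] by simp
qed

lemma pos_part_eq_add_neg_part: "sup a 0 = a + sup (- a) (0::'a::{ordered_real_vector, lattice})"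
  using vl.add_sup_distrib_left[of a "- a" 0] by (simp add: sup_commute)

lemma inf_pos_part_eq_0:
  fixes v q :: "'a::{ordered_real_vector, lattice}"
  assumes "0 \<le> v" "inf v q \<le> 0"
  shows "inf v (sup q 0) = 0"
proof -
  define m where "m = inf v (sup q 0)"
  define r where "r = sup (- q) 0"
  have "sup q 0 = q + r" unfolding r_def by (rule pos_part_eq_add_neg_part)
  then have "m - r \<le> q" by (simp add: m_def diff_le_eq le_infI2)
  moreover have "0 \<le> r" "m \<le> v" by (simp_all add: m_def r_def)
  then have "m - r \<le> v" by (simp add: diff_le_eq add_increasing2)
  ultimately have "m - r \<le> inf v q" by simp
  then have "m - r \<le> 0" using assms(2) by (rule order_trans)
  then have "m \<le> r" by simp
  then have "m \<le> inf (sup q 0) r" by (simp add: m_def)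
  then have "m \<le> 0" by (simp add: r_def inf_pos_neg_part)
  moreover have "0 \<le> m" using assms(1) by (simp add: m_def)
  ultimately show ?thesis unfolding m_def by (rule order.antisym)
qed

lemma le_sup_diff_scaleR:
  fixes t e v z :: "'a::{ordered_real_vector, lattice}"
  assumes "t \<le> e" "0 \<le> v" "v \<le> sup (z - t) 0"
  shows "t \<le> sup (z - v) (e - real n *\<^sub>R v)"
proof -
  define a where "a = z - t"
  have "v - a \<le> sup (- a) 0"
    using assms(3) pos_part_eq_add_neg_part[of a] by (simp add: a_def diff_le_eq add.commute)
  moreover have "real n *\<^sub>R v - (e - t) \<le> real n *\<^sub>R sup a 0"
    using assms by (simp add: a_def diff_le_eq add_increasing2 scaleR_left_mono)
  ultimately have "inf (v - a) (real n *\<^sub>R v - (e - t)) \<le> inf (sup (- a) 0) (real n *\<^sub>R sup a 0)"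
    by (rule inf_mono)
  also have "\<dots> = 0"
    by (rule inf_scaleR_eq_0) (simp_all add: inf_commute inf_pos_neg_part)
  also have "inf (v - a) (real n *\<^sub>R v - (e - t)) = - sup (a - v) (e - t - real n *\<^sub>R v)"
    by (simp only: vl.neg_sup_eq_inf minus_diff_eq)
  finally have "0 \<le> sup (a - v) (e - t - real n *\<^sub>R v)"
    by (simp only: neg_le_0_iff_le)
  also have "sup (a - v) (e - t - real n *\<^sub>R v) = sup (z - v) (e - real n *\<^sub>R v) - t"
    using vl.add_sup_distrib_right[of "z - v" "e - real n *\<^sub>R v" "- t"]
    by (simp add: a_def algebra_simps)
  finally show ?thesis by (simp only: diff_ge_0_iff_ge)
qed

lemma scaleR_le_of_le_sup_diff:
  fixes e v z :: "'a::{ordered_real_vector, lattice}"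
  assumes "z \<le> sup (z - v) (e - real n *\<^sub>R v)" "0 \<le> v" "z \<le> e"
  shows "real n *\<^sub>R v \<le> e - z"
proof -
  define d where "d = e - z"
  define p where "p = sup (real n *\<^sub>R v - d) 0"
  have shift: "sup (z - v) (e - real n *\<^sub>R v) - z = sup (- v) (d - real n *\<^sub>R v)"
    using vl.add_sup_distrib_right[of "z - v" "e - real n *\<^sub>R v" "- z"]
    by (simp add: d_def algebra_simps)
  have "0 \<le> sup (- v) (d - real n *\<^sub>R v)"
    using assms(1) by (simp only: shift[symmetric] diff_ge_0_iff_ge)
  then have "0 \<le> - inf v (real n *\<^sub>R v - d)"
    by (simp only: vl.neg_inf_eq_sup minus_diff_eq)
  then have "inf v (real n *\<^sub>R v - d) \<le> 0"
    by (simp only: neg_0_le_iff_le)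
  then have "inf v p = 0"
    unfolding p_def using assms(2) by (intro inf_pos_part_eq_0) simp_all
  then have "inf p (real n *\<^sub>R v) = 0"
    using assms(2) by (intro inf_scaleR_eq_0) (simp_all add: p_def inf_commute)
  moreover have "p \<le> real n *\<^sub>R v"
    using assms by (simp add: p_def d_def scaleR_nonneg_nonneg)
  ultimately have "p = 0" by (simp add: inf_absorb1)
  moreover have "real n *\<^sub>R v - d \<le> p" by (simp add: p_def)
  ultimately show ?thesis by (simp add: d_def)
qed

section \<open>The ideal generated by a sublattice\<close>

lemma vector_sublattice_subspace: "vector_sublattice E \<Longrightarrow> subspace E"
  unfolding vector_sublattice_def by blast

lemma vector_sublattice_sup: "vector_sublattice E \<Longrightarrow> x \<in> E \<Longrightarrow> y \<in> E \<Longrightarrow> sup x y \<in> E"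
  unfolding vector_sublattice_def by blast

lemma vector_sublattice_vabs: "vector_sublattice E \<Longrightarrow> x \<in> E \<Longrightarrow> vabs x \<in> E"
  unfolding vabs_def
  by (intro vector_sublattice_sup subspace_neg vector_sublattice_subspace)

lemma order_ideal_dominated:
  fixes E :: "'a::{ordered_real_vector, lattice} set"
  assumes "subspace E"
  shows "order_ideal {f. \<exists>e\<in>E. 0 \<le> e \<and> vabs f \<le> e}"
  unfolding order_ideal_def
proof (intro conjI allI impI subspaceI)
  show "0 \<in> {f. \<exists>e\<in>E. 0 \<le> e \<and> vabs f \<le> e}"
    using subspace_0[OF assms] by auto
next
  fix x y assume "x \<in> {f. \<exists>e\<in>E. 0 \<le> e \<and> vabs f \<le> e}" "y \<in> {f. \<exists>e\<in>E. 0 \<le> e \<and> vabs f \<le> e}"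
  then obtain e1 e2 where "e1 \<in> E" "0 \<le> e1" "vabs x \<le> e1" "e2 \<in> E" "0 \<le> e2" "vabs y \<le> e2"
    by blast
  moreover have "vabs (x + y) \<le> vabs x + vabs y" by (rule vl.abs_triangle_ineq)
  ultimately show "x + y \<in> {f. \<exists>e\<in>E. 0 \<le> e \<and> vabs f \<le> e}"
    using subspace_add[OF assms] by (intro CollectI bexI[of _ "e1 + e2"]) (auto intro: order_trans add_mono)
next
  fix c x assume "x \<in> {f. \<exists>e\<in>E. 0 \<le> e \<and> vabs f \<le> e}"
  then obtain e where "e \<in> E" "0 \<le> e" "vabs x \<le> e" by blast
  moreover have "vabs (c *\<^sub>R x) \<le> \<bar>c\<bar> *\<^sub>R vabs x" by (rule vabs_scaleR_le)
  moreover have "\<bar>c\<bar> *\<^sub>R vabs x \<le> \<bar>c\<bar> *\<^sub>R e" using \<open>vabs x \<le> e\<close> by (simp add: scaleR_left_mono)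
  ultimately show "c *\<^sub>R x \<in> {f. \<exists>e\<in>E. 0 \<le> e \<and> vabs f \<le> e}"
    using subspace_scale[OF assms]
    by (intro CollectI bexI[of _ "\<bar>c\<bar> *\<^sub>R e"]) (auto intro: order_trans simp: scaleR_nonneg_nonneg)
next
  fix f g assume "g \<in> {f. \<exists>e\<in>E. 0 \<le> e \<and> vabs f \<le> e} \<and> vabs f \<le> vabs g"
  then show "f \<in> {f. \<exists>e\<in>E. 0 \<le> e \<and> vabs f \<le> e}" by (blast intro: order_trans)
qed

lemma order_ideal_ideal_gen: "order_ideal (ideal_gen E)"
  unfolding ideal_gen_def order_ideal_def
  by (auto intro!: subspace_Inter)

lemma subset_ideal_gen: "E \<subseteq> ideal_gen E"
  unfolding ideal_gen_def by blast

lemma ideal_gen_solid: "g \<in> ideal_gen E \<Longrightarrow> vabs f \<le> vabs g \<Longrightarrow> f \<in> ideal_gen E"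
  using order_ideal_ideal_gen unfolding order_ideal_def by blast

lemma ideal_gen_eq:
  fixes E :: "'a::{ordered_real_vector, lattice} set"
  assumes "vector_sublattice E"
  shows "ideal_gen E = {f. \<exists>e\<in>E. 0 \<le> e \<and> vabs f \<le> e}"
proof
  have "E \<subseteq> {f. \<exists>e\<in>E. 0 \<le> e \<and> vabs f \<le> e}"
    using vector_sublattice_vabs[OF assms] vl.abs_ge_zero by blast
  then show "ideal_gen E \<subseteq> {f. \<exists>e\<in>E. 0 \<le> e \<and> vabs f \<le> e}"
    unfolding ideal_gen_def
    using order_ideal_dominated[OF vector_sublattice_subspace[OF assms]] by blast
next
  show "{f. \<exists>e\<in>E. 0 \<le> e \<and> vabs f \<le> e} \<subseteq> ideal_gen E"
    using subset_ideal_gen ideal_gen_solid vl.abs_of_nonneg by fastforce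
qed

lemma disj_compl_diff:
  fixes k1 k2 :: "'a::{ordered_real_vector, lattice}"
  assumes "k1 \<in> disj_compl H" "k2 \<in> disj_compl H"
  shows "k1 - k2 \<in> disj_compl H"
  unfolding disj_compl_def
proof (intro CollectI ballI)
  fix h assume "h \<in> H"
  then have disjoint: "inf (vabs h) (vabs k1) = 0" "inf (vabs h) (vabs k2) = 0"
    using assms unfolding disj_compl_def by (auto simp: inf_commute)
  have "vabs (k1 - k2) \<le> vabs k1 + vabs k2"
    using vl.abs_triangle_ineq[of k1 "- k2"] by simp
  then have "inf (vabs (k1 - k2)) (vabs h) \<le> inf (vabs h) (vabs k1 + vabs k2)"
    by (metis inf_commute inf_mono order_refl)
  also have "\<dots> \<le> inf (vabs h) (vabs k1) + inf (vabs h) (vabs k2)"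
    by (intro inf_add_le_add_inf vl.abs_ge_zero)
  finally show "inf (vabs (k1 - k2)) (vabs h) = 0"
    using disjoint by (intro order.antisym) simp_all
qed

section \<open>Regular sublattices whose ideal is a projection band\<close>

lemma archimedean_vlD:
  fixes v :: "'a::{ordered_real_vector, lattice}"
  assumes "archimedean_vl TYPE('a)" "0 \<le> v" "\<And>n. real n *\<^sub>R v \<le> y"
  shows "v = 0"
  using assms unfolding archimedean_vl_def by blast

lemma projection_band_ideal_gen_bound:
  fixes E :: "'a::{ordered_real_vector, lattice} set"
  assumes "vector_sublattice E" "projection_band (ideal_gen E)"
  obtains e where "e \<in> E" "\<forall>y\<in>E. 0 \<le> y \<and> y \<le> g \<longrightarrow> y \<le> e"
proof -
  obtain h k where hk: "h \<in> ideal_gen E" "k \<in> disj_compl (ideal_gen E)" "g = h + k"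
    using assms(2) unfolding projection_band_def by blast
  obtain e where e: "e \<in> E" "vabs h \<le> e"
    using hk(1) unfolding ideal_gen_eq[OF assms(1)] by blast
  have "y \<le> e" if y: "y \<in> E" "0 \<le> y" "y \<le> g" for y
  proof -
    have "inf y (vabs k) = 0"
      using hk(2) subset_ideal_gen y vl.abs_of_nonneg[of y]
      unfolding disj_compl_def by (fastforce simp: inf_commute)
    have "y \<le> vabs h + vabs k"
      using y(3) vl.abs_ge_self[of g] vl.abs_triangle_ineq[of h k] hk(3) by (blast intro: order_trans)
    then have "y = inf y (vabs h + vabs k)" by (simp add: inf_absorb1)
    also have "\<dots> \<le> inf y (vabs h) + inf y (vabs k)"
      using y(2) by (intro inf_add_le_add_inf vl.abs_ge_zero)
    also have "\<dots> \<le> e"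
      using \<open>inf y (vabs k) = 0\<close> e(2) by (simp add: le_infI2)
    finally show ?thesis .
  qed
  then show ?thesis using that e(1) by blast
qed

lemma is_inf_in_pos_part_diffs:
  fixes E Y :: "'a::{ordered_real_vector, lattice} set"
  assumes arch: "archimedean_vl TYPE('a)" and E: "vector_sublattice E"
    and Y: "Y \<subseteq> E" and e: "e \<in> E" "\<forall>y\<in>Y. y \<le> e"
    and z: "z \<in> E" "\<forall>s\<in>E. (\<forall>y\<in>Y. y \<le> s) \<longrightarrow> z \<le> s"
  shows "is_inf_in E ((\<lambda>y. sup (z - y) 0) ` Y) 0"
  unfolding is_inf_in_def
proof (intro conjI ballI impI)
  have S: "subspace E" using E by (rule vector_sublattice_subspace)
  show "0 \<in> E" using S by (rule subspace_0)
  fix w assume "w \<in> E" "\<forall>u\<in>(\<lambda>y. sup (z - y) 0) ` Y. w \<le> u"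
  define v where "v = sup w 0"
  have v: "v \<in> E" "0 \<le> v" "\<forall>y\<in>Y. v \<le> sup (z - y) 0"
    using \<open>w \<in> E\<close> \<open>\<forall>u\<in>_. w \<le> u\<close> vector_sublattice_sup[OF E _ subspace_0[OF S]]
    by (auto simp: v_def)
  txt \<open>Each (z - v) \<squnion> (e - n v) is an upper bound of Y in E, hence above z.\<close>
  have bound: "real n *\<^sub>R v \<le> e - z" for n
  proof (rule scaleR_le_of_le_sup_diff)
    show "z \<le> sup (z - v) (e - real n *\<^sub>R v)"
      using z e v Y vector_sublattice_sup[OF E] subspace_diff[OF S] subspace_scale[OF S]
      by (simp add: le_sup_diff_scaleR subset_iff)
    show "z \<le> e" using z e by blast
  qed (fact v(2))
  have "v = 0" by (rule archimedean_vlD[OF arch v(2) bound])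
  then show "w \<le> 0" by (metis v_def sup_ge1)
qed auto

lemma regular_sublattice_below_upper_bounds:
  fixes E Y :: "'a::{ordered_real_vector, lattice} set"
  assumes arch: "archimedean_vl TYPE('a)" and E: "vector_sublattice E"
    and reg: "regular_sublattice E"
    and Y: "Y \<subseteq> E" "\<forall>y\<in>Y. y \<le> e" "e \<in> E"
    and z: "z \<in> E" "\<forall>s\<in>E. (\<forall>y\<in>Y. y \<le> s) \<longrightarrow> z \<le> s"
    and g: "\<forall>y\<in>Y. y \<le> g"
  shows "z \<le> g"
proof -
  have S: "subspace E" using E by (rule vector_sublattice_subspace)
  have "(\<lambda>y. sup (z - y) 0) ` Y \<subseteq> E"
    using Y z vector_sublattice_sup[OF E _ subspace_0[OF S]] subspace_diff[OF S] by blast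
  moreover have "is_inf_in E ((\<lambda>y. sup (z - y) 0) ` Y) 0"
    using is_inf_in_pos_part_diffs[OF arch E Y(1) Y(3) Y(2) z] .
  ultimately have "is_inf_in UNIV ((\<lambda>y. sup (z - y) 0) ` Y) 0"
    using reg unfolding regular_sublattice_def by blast
  moreover have "\<forall>y\<in>Y. sup (z - g) 0 \<le> sup (z - y) 0"
    using g by (auto intro: le_supI1 diff_left_mono)
  ultimately have "sup (z - g) 0 \<le> 0" unfolding is_inf_in_def by blast
  then show ?thesis by simp
qed

lemma projection_band_below_eventual_bounds:
  fixes E :: "'a::{ordered_real_vector, lattice} set" and y :: "'i \<Rightarrow> 'a"
  assumes arch: "archimedean_vl TYPE('a)" and E: "vector_sublattice E"
    and reg: "regular_sublattice E" and pb: "projection_band (ideal_gen E)"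
    and y: "\<forall>\<^sub>F i in N. y i \<in> E \<and> 0 \<le> y i"
    and z: "z \<in> E" "\<forall>s\<in>E. (\<forall>\<^sub>F i in N. y i \<le> s) \<longrightarrow> z \<le> s"
    and g: "\<forall>\<^sub>F i in N. y i \<le> g"
  shows "z \<le> g"
proof -
  obtain e where e: "e \<in> E" "\<forall>y\<in>E. 0 \<le> y \<and> y \<le> g \<longrightarrow> y \<le> e"
    using projection_band_ideal_gen_bound[OF E pb] by blast
  define I where "I = {i. y i \<in> E \<and> 0 \<le> y i \<and> y i \<le> g}"
  have I: "\<forall>\<^sub>F i in N. i \<in> I"
    using eventually_conj[OF y g] by (rule eventually_mono) (simp add: I_def)
  show ?thesis
  proof (rule regular_sublattice_below_upper_bounds[OF arch E reg _ _ e(1) z(1)])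
    show "y ` I \<subseteq> E" "\<forall>u\<in>y ` I. u \<le> e" "\<forall>u\<in>y ` I. u \<le> g"
      using e(2) by (auto simp: I_def)
    show "\<forall>s\<in>E. (\<forall>u\<in>y ` I. u \<le> s) \<longrightarrow> z \<le> s"
    proof (intro ballI impI)
      fix s assume "s \<in> E" "\<forall>u\<in>y ` I. u \<le> s"
      then have "\<forall>\<^sub>F i in N. y i \<le> s" using I by (auto elim: eventually_mono)
      then show "z \<le> s" using z(2) \<open>s \<in> E\<close> by blast
    qed
  qed
qed

lemma order_conv_in_UNIV_imp_order_conv_in:
  fixes E :: "'a::{ordered_real_vector, lattice} set"
  assumes arch: "archimedean_vl TYPE('a)" and E: "vector_sublattice E"
    and reg: "regular_sublattice E" and pb: "projection_band (ideal_gen E)"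
    and N: "N \<noteq> bot" "\<forall>\<^sub>F i in N. x i \<in> E" and f: "f \<in> E"
    and conv: "order_conv_in UNIV N x f"
  shows "order_conv_in E N x f"
proof -
  obtain G where G: "is_inf_in UNIV G 0" "\<forall>g\<in>G. \<forall>\<^sub>F i in N. vabs (x i - f) \<le> g"
    using conv unfolding order_conv_in_def vabs_diff_le_iff by blast
  define G' where "G' = {e \<in> E. \<forall>\<^sub>F i in N. vabs (x i - f) \<le> e}"
  have y: "\<forall>\<^sub>F i in N. vabs (x i - f) \<in> E \<and> 0 \<le> vabs (x i - f)"
    using N(2) f vector_sublattice_vabs[OF E] subspace_diff[OF vector_sublattice_subspace[OF E]]
    by (auto elim: eventually_mono)
  have "is_inf_in E G' 0"
    unfolding is_inf_in_def
  proof (intro conjI ballI impI)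
    show "0 \<in> E" using subspace_0[OF vector_sublattice_subspace[OF E]] .
  next
    fix e assume "e \<in> G'"
    then have "\<forall>\<^sub>F i in N. vabs (x i - f) \<le> e" by (simp add: G'_def)
    then have "\<forall>\<^sub>F i in N. 0 \<le> e"
      by (rule eventually_mono) (rule order_trans[OF vl.abs_ge_zero])
    then show "0 \<le> e" using N(1) by (simp add: eventually_const_iff)
  next
    fix z assume "z \<in> E" "\<forall>e\<in>G'. z \<le> e"
    then have "z \<le> g" if "g \<in> G" for g
      using projection_band_below_eventual_bounds[OF arch E reg pb y] G(2) that
      by (simp add: G'_def)
    then show "z \<le> 0" using G(1) unfolding is_inf_in_def by blast
  qed
  then show ?thesis
    unfolding order_conv_in_def vabs_diff_le_iff[symmetric]
    by (intro exI[of _ G']) (auto simp: G'_def)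
qed

lemma regular_projection_band_imp_order_embedding:
  fixes E :: "'a::{ordered_real_vector, lattice} set"
  assumes "archimedean_vl TYPE('a)" "vector_sublattice E"
    and "regular_sublattice E" "projection_band (ideal_gen E)"
  shows "order_embedding E"
  unfolding order_embedding_def
proof (intro allI impI iffI)
  fix N :: "'a filter" and x f
  assume "order_conv_in E N x f"
  then show "order_conv_in UNIV N x f"
    using assms(3) unfolding order_conv_in_def regular_sublattice_def by blast
qed (rule order_conv_in_UNIV_imp_order_conv_in[OF assms])

section \<open>Order embeddings yield a projection band\<close>

text \<open>The tail filter of the net of differences a' - a, indexed by the pairs a \<le> a' of A.
  Since \<^const>\<open>order_embedding\<close> only quantifies over nets indexed by the carrier type itself,
  the net is represented by this filter on its values together with \<^const>\<open>id\<close>.\<close>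

definition difference_filter :: "'a::{ord, minus} set \<Rightarrow> 'a filter" where
  "difference_filter A = Abs_filter (\<lambda>Q. \<exists>a0\<in>A. \<forall>a\<in>A. \<forall>a'\<in>A. a0 \<le> a \<and> a \<le> a' \<longrightarrow> Q (a' - a))"

lemma eventually_difference_filter:
  fixes A :: "'a::{semilattice_sup, minus} set"
  assumes "A \<noteq> {}" "\<forall>x\<in>A. \<forall>y\<in>A. sup x y \<in> A"
  shows "eventually Q (difference_filter A) \<longleftrightarrow>
    (\<exists>a0\<in>A. \<forall>a\<in>A. \<forall>a'\<in>A. a0 \<le> a \<and> a \<le> a' \<longrightarrow> Q (a' - a))"
  unfolding difference_filter_def
proof (rule eventually_Abs_filter, rule is_filter.intro)
  fix P Q
  assume "\<exists>a0\<in>A. \<forall>a\<in>A. \<forall>a'\<in>A. a0 \<le> a \<and> a \<le> a' \<longrightarrow> P (a' - a)"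
    "\<exists>a0\<in>A. \<forall>a\<in>A. \<forall>a'\<in>A. a0 \<le> a \<and> a \<le> a' \<longrightarrow> Q (a' - a)"
  then obtain p q where "p \<in> A" "\<forall>a\<in>A. \<forall>a'\<in>A. p \<le> a \<and> a \<le> a' \<longrightarrow> P (a' - a)"
    "q \<in> A" "\<forall>a\<in>A. \<forall>a'\<in>A. q \<le> a \<and> a \<le> a' \<longrightarrow> Q (a' - a)" by blast
  then show "\<exists>a0\<in>A. \<forall>a\<in>A. \<forall>a'\<in>A. a0 \<le> a \<and> a \<le> a' \<longrightarrow> P (a' - a) \<and> Q (a' - a)"
    using assms(2) by (intro bexI[of _ "sup p q"]) auto
qed (use assms(1) in blast)+

lemma difference_filter_neq_bot:
  fixes A :: "'a::{semilattice_sup, minus} set"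
  assumes "A \<noteq> {}" "\<forall>x\<in>A. \<forall>y\<in>A. sup x y \<in> A"
  shows "difference_filter A \<noteq> bot"
  using eventually_difference_filter[OF assms, of "\<lambda>_. False"] by auto

lemma is_inf_in_upper_bound_gaps:
  fixes A :: "'a::{ordered_real_vector, lattice} set"
  assumes arch: "archimedean_vl TYPE('a)" and "0 \<in> A" "\<forall>a\<in>A. a \<le> f"
  shows "is_inf_in UNIV {b - a | b a. a \<in> A \<and> (\<forall>a'\<in>A. a' \<le> b)} 0"
  unfolding is_inf_in_def
proof (intro conjI ballI impI)
  fix w assume "\<forall>g\<in>{b - a | b a. a \<in> A \<and> (\<forall>a'\<in>A. a' \<le> b)}. w \<le> g"
  then have w: "w \<le> b - a" if "a \<in> A" "\<forall>a'\<in>A. a' \<le> b" for a b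
    using that by blast
  define v where "v = sup w 0"
  have v: "v \<le> b - a" if "a \<in> A" "\<forall>a'\<in>A. a' \<le> b" for a b
    using w[OF that] that by (simp add: v_def)
  have upper: "\<forall>a\<in>A. a \<le> f - real n *\<^sub>R v" for n
  proof (induction n)
    case 0 then show ?case using assms(3) by simp
  next
    case (Suc n)
    then show ?case using v by (fastforce simp: algebra_simps)
  qed
  have "real n *\<^sub>R v \<le> f" for n
  proof -
    have "0 \<le> f - real n *\<^sub>R v" using upper[of n] assms(2) by blast
    then show ?thesis by simp
  qed
  then have "v = 0" by (intro archimedean_vlD[OF arch]) (simp_all add: v_def)
  then show "w \<le> 0" by (metis v_def sup_ge1)
qed auto

lemma order_conv_in_UNIV_difference_filter:
  fixes A :: "'a::{ordered_real_vector, lattice} set"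
  assumes arch: "archimedean_vl TYPE('a)"
    and A: "0 \<in> A" "\<forall>x\<in>A. \<forall>y\<in>A. sup x y \<in> A" "\<forall>a\<in>A. a \<le> f"
  shows "order_conv_in UNIV (difference_filter A) id 0"
  unfolding order_conv_in_def
proof (intro exI conjI)
  let ?G = "{b - a | b a. a \<in> A \<and> (\<forall>a'\<in>A. a' \<le> b)}"
  show "is_inf_in UNIV ?G 0" using is_inf_in_upper_bound_gaps[OF arch A(1) A(3)] .
  have A_ne: "A \<noteq> {}" using A(1) by blast
  show "\<forall>g\<in>?G. \<forall>\<^sub>F i in difference_filter A. 0 - g \<le> id i \<and> id i \<le> 0 + g"
  proof
    fix g assume "g \<in> ?G"
    then obtain b a0 where g: "g = b - a0" "a0 \<in> A" "\<forall>a'\<in>A. a' \<le> b" by blast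
    have "- g \<le> a' - a \<and> a' - a \<le> g" if "a \<in> A" "a' \<in> A" "a0 \<le> a" "a \<le> a'" for a a'
      using that g by (auto intro: order_trans[of _ 0] diff_mono)
    then show "\<forall>\<^sub>F i in difference_filter A. 0 - g \<le> id i \<and> id i \<le> 0 + g"
      unfolding eventually_difference_filter[OF A_ne A(2)] using A(1) g(2)
      by (intro bexI[of _ a0]) auto
  qed
qed simp

lemma order_embedding_order_conv_in_difference_filter:
  fixes E A :: "'a::{ordered_real_vector, lattice} set"
  assumes arch: "archimedean_vl TYPE('a)" and S: "subspace E" and emb: "order_embedding E"
    and A: "0 \<in> A" "A \<subseteq> E" "\<forall>x\<in>A. \<forall>y\<in>A. sup x y \<in> A" "\<forall>a\<in>A. a \<le> f"
  shows "order_conv_in E (difference_filter A) id 0"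
proof -
  have A_ne: "A \<noteq> {}" using A(1) by blast
  have "\<forall>\<^sub>F i in difference_filter A. id i \<in> E"
    unfolding eventually_difference_filter[OF A_ne A(3)]
    using A(1,2) subspace_diff[OF S] by (intro bexI[of _ 0]) auto
  then show ?thesis
    using emb[unfolded order_embedding_def, rule_format, OF difference_filter_neq_bot[OF A_ne A(3)]]
      order_conv_in_UNIV_difference_filter[OF arch A(1,3,4)] subspace_0[OF S]
    by blast
qed

lemma order_conv_in_difference_filter_bounded:
  fixes E A :: "'a::{ordered_real_vector, lattice} set"
  assumes S: "subspace E"
    and A: "A \<subseteq> E" "A \<noteq> {}" "\<forall>x\<in>A. \<forall>y\<in>A. sup x y \<in> A"
    and conv: "order_conv_in E (difference_filter A) id 0"
  obtains u where "u \<in> E" "\<forall>a\<in>A. a \<le> u"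
proof -
  obtain G where G: "G \<subseteq> E" "is_inf_in E G 0"
    "\<forall>g\<in>G. \<exists>a0\<in>A. \<forall>a\<in>A. \<forall>a'\<in>A. a0 \<le> a \<and> a \<le> a' \<longrightarrow> a' - a \<le> g"
    using conv unfolding order_conv_in_def eventually_difference_filter[OF A(2,3)] by force
  show ?thesis
  proof (cases "G = {}")
    case True
    then have "\<forall>a\<in>A. a \<le> 0" using G(2) A(1) unfolding is_inf_in_def by blast
    then show ?thesis using that subspace_0[OF S] by blast
  next
    case False
    then obtain g a0 where "g \<in> G" "a0 \<in> A"
      and gap: "\<forall>a\<in>A. \<forall>a'\<in>A. a0 \<le> a \<and> a \<le> a' \<longrightarrow> a' - a \<le> g"
      using G(3) by blast
    have "a \<le> a0 + g" if "a \<in> A" for a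
      using gap \<open>a0 \<in> A\<close> A(3) that by (fastforce simp: diff_le_eq add.commute)
    moreover have "a0 + g \<in> E"
      using \<open>a0 \<in> A\<close> \<open>g \<in> G\<close> A(1) G(1) subspace_add[OF S] by blast
    ultimately show ?thesis using that by blast
  qed
qed

lemma order_conv_in_difference_filter_translation:
  fixes E A :: "'a::{ordered_real_vector, lattice} set"
  assumes A: "A \<noteq> {}" "\<forall>x\<in>A. \<forall>y\<in>A. sup x y \<in> A"
    and conv: "order_conv_in E (difference_filter A) id 0"
    and e: "e \<in> E" "0 \<le> e" "\<forall>a\<in>A. a + e \<in> A"
  shows "e \<le> 0"
proof -
  obtain G where G: "is_inf_in E G 0"
    "\<forall>g\<in>G. \<exists>a0\<in>A. \<forall>a\<in>A. \<forall>a'\<in>A. a0 \<le> a \<and> a \<le> a' \<longrightarrow> a' - a \<le> g"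
    using conv unfolding order_conv_in_def eventually_difference_filter[OF A] by force
  have "e \<le> g" if "g \<in> G" for g
  proof -
    obtain a0 where "a0 \<in> A" "\<forall>a\<in>A. \<forall>a'\<in>A. a0 \<le> a \<and> a \<le> a' \<longrightarrow> a' - a \<le> g"
      using G(2) \<open>g \<in> G\<close> by blast
    moreover have "a0 + e \<in> A" "a0 \<le> a0 + e" using e(2,3) \<open>a0 \<in> A\<close> by simp_all
    ultimately have "(a0 + e) - a0 \<le> g" by blast
    then show ?thesis by simp
  qed
  then show ?thesis using G(1) e(1) unfolding is_inf_in_def by blast
qed

lemma order_dense_imp_disj_compl:
  fixes E :: "'a::{ordered_real_vector, lattice} set"
  assumes dense: "order_dense_in E (ideal_gen E)"
    and k: "0 \<le> k" "\<forall>e\<in>E. 0 < e \<longrightarrow> \<not> e \<le> k"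
  shows "k \<in> disj_compl (ideal_gen E)"
  unfolding disj_compl_def
proof (intro CollectI ballI)
  fix h assume "h \<in> ideal_gen E"
  define v where "v = inf k (vabs h)"
  have "0 \<le> v" using k(1) by (simp add: v_def)
  then have "vabs v \<le> vabs h" by (simp add: v_def)
  then have "v \<in> ideal_gen E" using \<open>h \<in> ideal_gen E\<close> ideal_gen_solid by blast
  have "\<not> 0 < v"
  proof
    assume "0 < v"
    then obtain e where "e \<in> E" "0 < e" "e \<le> v"
      using dense \<open>v \<in> ideal_gen E\<close> unfolding order_dense_in_def by blast
    then show False using k(2) by (simp add: v_def)
  qed
  then show "inf (vabs k) (vabs h) = 0"
    using \<open>0 \<le> v\<close> k(1) by (simp add: v_def order_less_le)
qed

lemma order_embedding_decompose_nonneg: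
  fixes E :: "'a::{ordered_real_vector, lattice} set"
  assumes arch: "archimedean_vl TYPE('a)" and E: "vector_sublattice E"
    and dense: "order_dense_in E (ideal_gen E)" and emb: "order_embedding E"
    and "0 \<le> f"
  shows "\<exists>h\<in>ideal_gen E. \<exists>k\<in>disj_compl (ideal_gen E). f = h + k"
proof -
  have S: "subspace E" using E by (rule vector_sublattice_subspace)
  define A where "A = {e \<in> E. 0 \<le> e \<and> e \<le> f}"
  have "sup x y \<in> A" if "x \<in> A" "y \<in> A" for x y
    using that vector_sublattice_sup[OF E, of x y] by (simp add: A_def le_supI1)
  moreover have "0 \<in> A" "A \<subseteq> E" "\<forall>a\<in>A. a \<le> f"
    using \<open>0 \<le> f\<close> subspace_0[OF S] by (auto simp: A_def)
  ultimately have A: "0 \<in> A" "A \<subseteq> E" "\<forall>x\<in>A. \<forall>y\<in>A. sup x y \<in> A" "\<forall>a\<in>A. a \<le> f"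
    by simp_all
  then have A_ne: "A \<noteq> {}" by blast
  have conv: "order_conv_in E (difference_filter A) id 0"
    by (rule order_embedding_order_conv_in_difference_filter[OF arch S emb A])
  obtain u where u: "u \<in> E" "\<forall>a\<in>A. a \<le> u"
    using order_conv_in_difference_filter_bounded[OF S A(2) A_ne A(3) conv] by blast
  define h where "h = inf f u"
  define k where "k = f - h"
  have "0 \<le> h" "h \<le> u" using \<open>0 \<le> f\<close> u(2) A(1) by (simp_all add: h_def)
  then have "0 \<le> u" "vabs h \<le> u" by simp_all
  then have "h \<in> ideal_gen E" unfolding ideal_gen_eq[OF E] using u(1) by blast
  moreover have "k \<in> disj_compl (ideal_gen E)"
  proof (rule order_dense_imp_disj_compl[OF dense])
    show "0 \<le> k" unfolding k_def h_def by (simp only: diff_ge_0_iff_ge inf_le1)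
    show "\<forall>e\<in>E. 0 < e \<longrightarrow> \<not> e \<le> k"
    proof (intro ballI impI notI)
      fix e assume e: "e \<in> E" "0 < e" "e \<le> k"
      have "a + e \<in> A" if "a \<in> A" for a
      proof -
        have "a \<le> h" using that u(2) by (simp add: A_def h_def)
        then have "a + e \<le> h + k" using e(3) by (rule add_mono)
        then have "a + e \<le> f" by (simp add: k_def)
        then show ?thesis using that e(1,2) subspace_add[OF S] by (simp add: A_def)
      qed
      then have "e \<le> 0"
        using order_conv_in_difference_filter_translation[OF A_ne A(3) conv e(1)] e(2)
        by (simp add: order_less_imp_le)
      then show False using e(2) by simp
    qed
  qed
  moreover have "f = h + k" by (simp add: k_def)
  ultimately show ?thesis by blast
qed

lemma order_embedding_imp_projection_band:
  fixes E :: "'a::{ordered_real_vector, lattice} set"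
  assumes "archimedean_vl TYPE('a)" "vector_sublattice E"
    and "order_dense_in E (ideal_gen E)" "order_embedding E"
  shows "projection_band (ideal_gen E)"
  unfolding projection_band_def
proof (intro conjI allI order_ideal_ideal_gen)
  fix f :: 'a
  obtain h1 k1 where "h1 \<in> ideal_gen E" "k1 \<in> disj_compl (ideal_gen E)" "sup f 0 = h1 + k1"
    using order_embedding_decompose_nonneg[OF assms, of "sup f 0"] by auto
  moreover obtain h2 k2 where "h2 \<in> ideal_gen E" "k2 \<in> disj_compl (ideal_gen E)" "sup (- f) 0 = h2 + k2"
    using order_embedding_decompose_nonneg[OF assms, of "sup (- f) 0"] by auto
  moreover have "subspace (ideal_gen E)"
    using order_ideal_ideal_gen unfolding order_ideal_def by blast
  ultimately show "\<exists>h\<in>ideal_gen E. \<exists>k\<in>disj_compl (ideal_gen E). f = h + k"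
    using pos_part_eq_add_neg_part[of f]
    by (intro bexI[of _ "h1 - h2"] bexI[of _ "k1 - k2"] subspace_diff disj_compl_diff)
      (auto simp: algebra_simps)
qed

theorem proposition5p5:
  fixes E :: "'a::{ordered_real_vector, lattice} set"
  assumes "archimedean_vl TYPE('a)"
    and "vector_sublattice E"
  shows "(regular_sublattice E \<and> projection_band (ideal_gen E) \<longrightarrow> order_embedding E)
    \<and> (order_dense_in E (ideal_gen E) \<and> order_embedding E \<longrightarrow> projection_band (ideal_gen E))"
  using regular_projection_band_imp_order_embedding[OF assms]
    order_embedding_imp_projection_band[OF assms]
  by blast

end
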